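(* Define integers $a(n)$ by $\sum_{n\ge0}a(n)q^n=\frac{f_1f_6}{f_2^2f_3}$. Then for all $n\geq 0$, $a(24n+13)\equiv 0\pmod 2$.
   Context: For a positive integer $r$, $f_r=\prod_{k\geq1}(1-q^{rk})$, a formal power series in $q$. *)

theory Defs
  imports "HOL-Computational_Algebra.Formal_Power_Series"
begin

text \<open>f r = prod_{k>=1} (1 - q^(r k)) as an integer formal power series (r >= 1).
  For r >= 1 the n-th coefficient of the infinite product equals the n-th coefficient
  of the finite partial product over k = 1..n, since the remaining factors are
  congruent to 1 modulo q^(n+1).\<close>
definition f :: "nat \<Rightarrow> int fps" where
  "f r = Abs_fps (\<lambda>n. fps_nth (\<Prod>k\<in>{1..n}. (1 - fps_X ^ (r * k))) n)"

end

(*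
  Modulo 2 the generating function is f3 / f1^3, because f(2r) = f(r)^2 in characteristic 2.
  Two instances of the Jacobi triple product, obtained from Cauchy's q-binomial theorem by
  letting the number of factors grow, give Euler's f1 = sum q^(t(3t-1)/2) and Jacobi's
  f1^3 = sum q^(t(2t-1)) modulo 2. Splitting the latter exponents modulo 3 yields
  f1^3 = f3 + q f9^3, and a self-similarity argument then gives
  D := f1^3 f3^3 = f4^3 + q f12^3. Since D^4 = D(q^4), the series f3 / f1^3 = f12 D^3 / D(q^4)
  has 4-section f1^3 f3 at the residue 1; its 3-section at the residue 0 is f1^2, which only
  has even powers of q. Hence a(4 (3 (2n + 1)) + 1) = a(24n + 13) is even.
*)
theory Submission
  imports Defs "HOL-Library.Z2" "HOL-Computational_Algebra.Primes"
begin

unbundle fps_syntax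

section \<open>Characteristic 2\<close>

lemma CHAR_bit [simp]: "CHAR(bit) = 2"
proof -
  have "(of_nat n :: bit) = 0 \<longleftrightarrow> even n" for n
    by (induction n) auto
  then show ?thesis
    by (intro CHAR_eqI) simp_all
qed

lemma of_int_bit_eq_0_iff: "(of_int z :: bit) = 0 \<longleftrightarrow> even z"
  by (simp add: of_int_eq_0_iff_char_dvd)

lemma bit_fps_minus_eq_add: "(F :: bit fps) - G = F + G"
  by (simp add: minus_CHAR_2)

lemma bit_fps_add_self: "(F :: bit fps) + F = 0"
  by (metis bit_fps_minus_eq_add diff_self)

lemma bit_fps_power2_add: "((F :: bit fps) + G) ^ 2 = F ^ 2 + G ^ 2"
  by (rule freshmans_dream) simp_all

lemma bit_fps_power3_add: "((F :: bit fps) + G) ^ 3 = F ^ 3 + F ^ 2 * G + F * G ^ 2 + G ^ 3"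
proof -
  have "(F + G) ^ 3 = (F + G) ^ 2 * (F + G)"
    by (simp add: power2_eq_square power3_eq_cube)
  also have "\<dots> = (F ^ 2 + G ^ 2) * (F + G)"
    by (simp only: bit_fps_power2_add)
  finally show ?thesis
    by (simp add: algebra_simps power2_eq_square power3_eq_cube)
qed

definition fps_map_of_int :: "int fps \<Rightarrow> 'a :: comm_ring_1 fps" where
  "fps_map_of_int F = Abs_fps (\<lambda>n. of_int (F $ n))"

lemma fps_map_of_int_nth [simp]: "fps_map_of_int F $ n = of_int (F $ n)"
  by (simp add: fps_map_of_int_def)

lemma fps_map_of_int_1 [simp]: "fps_map_of_int 1 = 1"
  by (rule fps_ext) simp

lemma fps_map_of_int_diff [simp]: "fps_map_of_int (F - G) = fps_map_of_int F - fps_map_of_int G"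
  by (rule fps_ext) simp

lemma fps_map_of_int_X [simp]: "fps_map_of_int fps_X = fps_X"
  by (rule fps_ext) simp

lemma fps_map_of_int_mult [simp]: "fps_map_of_int (F * G) = fps_map_of_int F * fps_map_of_int G"
  by (rule fps_ext) (simp add: fps_mult_nth)

lemma fps_map_of_int_power [simp]: "fps_map_of_int (F ^ k) = fps_map_of_int F ^ k"
  by (induction k) simp_all

lemma fps_map_of_int_prod [simp]: "fps_map_of_int (prod h S) = (\<Prod>x\<in>S. fps_map_of_int (h x))"
  by (induction S rule: infinite_finite_induct) simp_all

section \<open>Dilations, sections and truncations of power series\<close>

definition fps_dilate :: "nat \<Rightarrow> 'a :: idom fps \<Rightarrow> 'a fps" where
  "fps_dilate k F = F oo fps_X ^ k"

lemma fps_dilate_nth: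
  assumes "k > 0"
  shows "fps_dilate k F $ n = (if k dvd n then F $ (n div k) else 0)"
proof -
  have "fps_dilate k F $ n = (\<Sum>i=0..n. F $ i * (fps_X ^ (k * i)) $ n)"
    by (simp add: fps_dilate_def fps_compose_nth power_mult)
  also have "\<dots> = (\<Sum>i=0..n. if k dvd n \<and> i = n div k then F $ i else 0)"
    by (rule sum.cong) (use assms in auto)
  also have "\<dots> = (if k dvd n then F $ (n div k) else 0)"
    by simp
  finally show ?thesis .
qed

lemma fps_dilate_1 [simp]: "fps_dilate k 1 = 1"
  by (simp add: fps_dilate_def)

lemma fps_dilate_X [simp]: "k > 0 \<Longrightarrow> fps_dilate k fps_X = fps_X ^ k"
  by (simp add: fps_dilate_def)

lemma fps_dilate_add [simp]: "fps_dilate k (F + G) = fps_dilate k F + fps_dilate k G"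
  by (simp add: fps_dilate_def fps_compose_add_distrib)

lemma fps_dilate_diff [simp]: "fps_dilate k (F - G) = fps_dilate k F - fps_dilate k G"
  by (simp add: fps_dilate_def fps_compose_sub_distrib)

lemma fps_dilate_mult [simp]: "k > 0 \<Longrightarrow> fps_dilate k (F * G) = fps_dilate k F * fps_dilate k G"
  by (simp add: fps_dilate_def fps_compose_mult_distrib)

lemma fps_dilate_power [simp]: "k > 0 \<Longrightarrow> fps_dilate k (F ^ m) = fps_dilate k F ^ m"
  by (simp add: fps_dilate_def fps_compose_power)

lemma fps_dilate_prod: "k > 0 \<Longrightarrow> fps_dilate k (prod h S) = (\<Prod>x\<in>S. fps_dilate k (h x))"
  by (simp add: fps_dilate_def fps_compose_prod_distrib)

lemma fps_dilate_dilate: "a > 0 \<Longrightarrow> b > 0 \<Longrightarrow> fps_dilate a (fps_dilate b F) = fps_dilate (a * b) F"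
  by (rule fps_ext) (auto simp: fps_dilate_nth div_mult2_eq dvd_mult_imp_div dest: dvd_mult_left)

lemma fps_eq_0_if_eq_X_mult_dilate:
  fixes F :: "'a :: idom fps"
  assumes "k > 0" "F = fps_X * fps_dilate k F"
  shows "F = 0"
proof (rule fps_ext)
  fix n
  show "F $ n = 0 $ n"
  proof (induction n rule: less_induct)
    case (less n)
    have "F $ n = (fps_X * fps_dilate k F) $ n"
      by (subst assms(2)) simp
    also have "\<dots> = 0"
      using less[of "(n - 1) div k"] assms(1)
      by (cases n) (auto simp: fps_dilate_nth intro: le_imp_less_Suc div_le_dividend)
    finally show ?case
      by simp
  qed
qed

text \<open>The terms \<open>i\<close> and \<open>n - i\<close> of the Cauchy product cancel in pairs, and the middle
  term \<open>F $ (n div 2) * F $ (n div 2)\<close> equals \<open>F $ (n div 2)\<close>.\<close>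
lemma bit_fps_power2_eq_dilate: "(F :: bit fps) ^ 2 = fps_dilate 2 F"
proof (rule fps_ext)
  fix n
  define h where "h i = F $ i * F $ (n - i)" for i
  define L where "L = {i. i \<le> n \<and> 2 * i < n}"
  define M where "M = {i. i \<le> n \<and> 2 * i = n}"
  define R where "R = {i. i \<le> n \<and> n < 2 * i}"
  have "{0..n} = L \<union> M \<union> R"
    by (auto simp: L_def M_def R_def)
  then have "(F ^ 2) $ n = sum h (L \<union> M \<union> R)"
    by (simp only: power2_eq_square fps_mult_nth h_def[symmetric])
  also have "\<dots> = sum h L + sum h M + sum h R"
    by (subst sum.union_disjoint; auto simp: L_def M_def R_def sum.union_disjoint
        simp del: add_bit_eq_xor)+
  also have "sum h R = sum h L"
    by (rule sum.reindex_bij_witness[of _ "\<lambda>i. n - i" "\<lambda>i. n - i"])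
      (auto simp: L_def R_def h_def)
  also have "sum h M = (if even n then F $ (n div 2) else 0)"
  proof -
    have "M = (if even n then {n div 2} else {})"
      by (auto simp: M_def)
    moreover have "x * x = x" for x :: bit
      by (cases x) simp_all
    ultimately show ?thesis
      by (auto simp: h_def simp del: mult_bit_eq_and)
  qed
  also have "sum h L + x + sum h L = x" for x
    by (cases x; cases "sum h L") simp_all
  finally show "(F ^ 2) $ n = fps_dilate 2 F $ n"
    by (simp add: fps_dilate_nth)
qed

lemma bit_fps_power4_eq_dilate: "(F :: bit fps) ^ 4 = fps_dilate 4 F"
proof -
  have "F ^ 4 = (F ^ 2) ^ 2"
    by (simp flip: power_mult)
  then show ?thesis
    by (simp add: bit_fps_power2_eq_dilate fps_dilate_dilate)
qed

definition fps_section :: "nat \<Rightarrow> nat \<Rightarrow> 'a fps \<Rightarrow> 'a fps" where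
  "fps_section k r F = Abs_fps (\<lambda>n. F $ (k * n + r))"

lemma fps_section_nth [simp]: "fps_section k r F $ n = F $ (k * n + r)"
  by (simp add: fps_section_def)

lemma fps_section_add [simp]:
  "fps_section k r (F + G :: 'a :: monoid_add fps) = fps_section k r F + fps_section k r G"
  by (rule fps_ext) simp

lemma fps_section_section: "fps_section a r (fps_section b s F) = fps_section (b * a) (b * r + s) F"
  by (rule fps_ext) (simp add: algebra_simps)

lemma fps_section_mult_dilate:
  fixes F Z :: "'a :: idom fps"
  assumes "r < k"
  shows "fps_section k r (F * fps_dilate k Z) = fps_section k r F * Z"
proof (rule fps_ext)
  fix n
  have k: "k > 0"
    using assms by simp
  define h where "h i = (if k dvd i then Z $ (i div k) else 0) * F $ (k * n + r - i)" for i
  have "fps_section k r (F * fps_dilate k Z) $ n = (fps_dilate k Z * F) $ (k * n + r)"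
    by (simp add: mult.commute)
  also have "\<dots> = (\<Sum>i=0..k*n+r. h i)"
    by (simp add: fps_mult_nth fps_dilate_nth k h_def)
  also have "\<dots> = (\<Sum>i\<in>(\<lambda>m. k * m) ` {0..n}. h i)"
  proof (rule sum.mono_neutral_right)
    show "(\<lambda>m. k * m) ` {0..n} \<subseteq> {0..k*n+r}"
      by (auto intro!: trans_le_add1 mult_le_mono2)
    have "h i = 0" if "i \<le> k * n + r" "i \<notin> (\<lambda>m. k * m) ` {0..n}" for i
    proof (cases "k dvd i")
      case True
      then obtain m where "i = k * m"
        by blast
      with that assms have "k * m < k * Suc n"
        by simp
      then have "m \<le> n"
        by (simp only: mult_less_cancel1) simp
      then show ?thesis
        using that \<open>i = k * m\<close> by auto
    qed (simp add: h_def)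
    then show "\<forall>i\<in>{0..k*n+r} - (\<lambda>m. k * m) ` {0..n}. h i = 0"
      by auto
  qed simp
  also have "\<dots> = (\<Sum>m=0..n. Z $ m * F $ (k * (n - m) + r))"
    using k by (subst sum.reindex) (auto simp: inj_on_def h_def diff_mult_distrib2 intro!: sum.cong)
  also have "\<dots> = (fps_section k r F * Z) $ n"
    by (simp add: fps_mult_nth mult.commute)
  finally show "fps_section k r (F * fps_dilate k Z) $ n = (fps_section k r F * Z) $ n" .
qed

lemma fps_section_X_power_dilate:
  fixes Z :: "'a :: idom fps"
  assumes "r < k" "s < k"
  shows "fps_section k r (fps_X ^ s * fps_dilate k Z) = (if s = r then Z else 0)"
proof -
  have "fps_section k r (fps_X ^ s) = (if s = r then 1 else 0 :: 'a fps)"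
  proof (rule fps_ext)
    fix n
    have "k * n + r = s \<longleftrightarrow> n = 0 \<and> s = r"
      using assms by (cases n) auto
    then show "fps_section k r (fps_X ^ s) $ n = (if s = r then 1 else 0 :: 'a fps) $ n"
      by auto
  qed
  then show ?thesis
    using assms(1) by (simp add: fps_section_mult_dilate)
qed

lemma fps_cutoff_mult_cutoff: "fps_cutoff k (fps_cutoff k A * fps_cutoff k B) = fps_cutoff k (A * B)"
  by (simp add: fps_cutoff_eq_fps_cutoff_iff fps_cutoff_left_mult_nth fps_cutoff_right_mult_nth)

lemma fps_cutoff_mult_cong:
  assumes "fps_cutoff k A = fps_cutoff k A'" "fps_cutoff k B = fps_cutoff k B'"
  shows "fps_cutoff k (A * B) = fps_cutoff k (A' * B')"
  by (simp only: fps_cutoff_mult_cutoff[of k A B, symmetric] fps_cutoff_mult_cutoff[of k A' B'] assms)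

lemma fps_cutoff_sum_cong:
  "(\<And>x. x \<in> S \<Longrightarrow> fps_cutoff k (h x) = fps_cutoff k (h' x)) \<Longrightarrow>
    fps_cutoff k (sum h S) = fps_cutoff k (sum h' S)"
  by (induction S rule: infinite_finite_induct) (simp_all add: fps_cutoff_add)

lemma fps_cutoff_X_power_mult: "k \<le> e \<Longrightarrow> fps_cutoff k (fps_X ^ e * F) = 0"
  by (rule fps_ext) (simp add: fps_X_power_mult_nth)

lemma fps_cutoff_mult_right_cancel:
  fixes A B W :: "'a :: field fps"
  assumes "fps_cutoff k (A * W) = fps_cutoff k (B * W)" "W $ 0 \<noteq> 0"
  shows "fps_cutoff k A = fps_cutoff k B"
  using fps_cutoff_mult_cong[OF assms(1) refl, of "inverse W"] assms(2)
  by (simp add: mult.assoc inverse_mult_eq_1')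

lemma fps_eqI_cutoff:
  assumes "\<And>i. fps_cutoff (Suc i) A = fps_cutoff (Suc i) B"
  shows "A = B"
proof (rule fps_ext)
  fix n
  show "A $ n = B $ n"
    using assms[of n] by (simp add: fps_cutoff_eq_fps_cutoff_iff)
qed

section \<open>Gaussian binomials\<close>

definition q_pochhammer :: "'a :: comm_ring_1 \<Rightarrow> nat \<Rightarrow> 'a" where
  "q_pochhammer Q n = (\<Prod>i<n. 1 - Q ^ Suc i)"

lemma q_pochhammer_0 [simp]: "q_pochhammer Q 0 = 1"
  by (simp add: q_pochhammer_def)

lemma q_pochhammer_Suc: "q_pochhammer Q (Suc n) = q_pochhammer Q n * (1 - Q ^ Suc n)"
  by (simp add: q_pochhammer_def)

fun gauss_binomial :: "'a :: comm_ring_1 \<Rightarrow> nat \<Rightarrow> nat \<Rightarrow> 'a" where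
  "gauss_binomial Q m 0 = 1"
| "gauss_binomial Q 0 (Suc j) = 0"
| "gauss_binomial Q (Suc m) (Suc j) = gauss_binomial Q m (Suc j) + Q ^ (m - j) * gauss_binomial Q m j"

lemma gauss_binomial_eq_0: "m < j \<Longrightarrow> gauss_binomial Q m j = 0"
proof (induction m arbitrary: j)
  case 0
  then show ?case by (cases j) auto
next
  case (Suc m)
  then show ?case by (cases j) auto
qed

lemma Suc_choose_two: "Suc j choose 2 = (j choose 2) + j"
  by (simp add: numeral_2_eq_2)

lemma sum_lessThan_eq_choose_two: "(\<Sum>i<n. i) = n choose 2"
  by (induction n) (simp_all add: Suc_choose_two binomial_eq_0)

lemma two_mult_choose_two: "2 * (n choose 2) = n * (n - 1)"
  by (induction n) (auto simp: Suc_choose_two binomial_eq_0 algebra_simps)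

theorem q_binomial_theorem:
  fixes x y Q :: "'a :: comm_ring_1"
  shows "(\<Prod>i<m. x + y * Q ^ i) =
    (\<Sum>j\<le>m. gauss_binomial Q m j * Q ^ (j choose 2) * y ^ j * x ^ (m - j))"
proof (induction m)
  case 0
  then show ?case by (simp add: binomial_eq_0)
next
  case (Suc m)
  define c where "c j = gauss_binomial Q m j * Q ^ (j choose 2) * y ^ j * x ^ (m - j)" for j
  have "(\<Prod>i<Suc m. x + y * Q ^ i) = (\<Sum>j\<le>m. c j * x) + (\<Sum>j\<le>m. c j * (y * Q ^ m))"
    using Suc by (simp add: c_def sum_distrib_right distrib_left sum.distrib)
  also have "(\<Sum>j\<le>m. c j * x) =
      x ^ Suc m + (\<Sum>j\<le>m. gauss_binomial Q m (Suc j) * Q ^ (Suc j choose 2) * y ^ Suc j * x ^ (m - j))"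
  proof -
    have "(\<Sum>j\<le>m. c j * x) =
        (\<Sum>j\<le>Suc m. gauss_binomial Q m j * Q ^ (j choose 2) * y ^ j * x ^ (Suc m - j))"
      by (auto simp: c_def Suc_diff_le gauss_binomial_eq_0 ac_simps intro!: sum.cong)
    then show ?thesis
      by (simp only: sum.atMost_Suc_shift) (simp add: binomial_eq_0)
  qed
  also have "(\<Sum>j\<le>m. c j * (y * Q ^ m)) =
      (\<Sum>j\<le>m. Q ^ (m - j) * gauss_binomial Q m j * Q ^ (Suc j choose 2) * y ^ Suc j * x ^ (m - j))"
  proof (rule sum.cong)
    fix j
    assume "j \<in> {..m}"
    then have "Q ^ (m - j) * Q ^ (Suc j choose 2) = Q ^ (j choose 2) * Q ^ m"
      by (simp add: Suc_choose_two add.commute flip: power_add)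
    then show "c j * (y * Q ^ m) =
        Q ^ (m - j) * gauss_binomial Q m j * Q ^ (Suc j choose 2) * y ^ Suc j * x ^ (m - j)"
      unfolding c_def by (simp add: algebra_simps)
  qed simp
  also have "x ^ Suc m +
        (\<Sum>j\<le>m. gauss_binomial Q m (Suc j) * Q ^ (Suc j choose 2) * y ^ Suc j * x ^ (m - j)) +
        (\<Sum>j\<le>m. Q ^ (m - j) * gauss_binomial Q m j * Q ^ (Suc j choose 2) * y ^ Suc j * x ^ (m - j)) =
      x ^ Suc m +
        (\<Sum>j\<le>m. gauss_binomial Q (Suc m) (Suc j) * Q ^ (Suc j choose 2) * y ^ Suc j * x ^ (m - j))"
    by (simp add: algebra_simps flip: sum.distrib)
  also have "\<dots> = (\<Sum>j\<le>Suc m. gauss_binomial Q (Suc m) j * Q ^ (j choose 2) * y ^ j * x ^ (Suc m - j))"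
    by (simp only: sum.atMost_Suc_shift) (simp add: binomial_eq_0)
  finally show ?case .
qed

lemma gauss_binomial_mult_q_pochhammer:
  "j \<le> m \<Longrightarrow> gauss_binomial Q m j * q_pochhammer Q j * q_pochhammer Q (m - j) = q_pochhammer Q m"
proof (induction m arbitrary: j)
  case 0
  then show ?case by simp
next
  case (Suc m)
  show ?case
  proof (cases j)
    case 0
    then show ?thesis by simp
  next
    case (Suc k)
    have left: "gauss_binomial Q m (Suc k) * q_pochhammer Q (Suc k) * q_pochhammer Q (m - k) =
        q_pochhammer Q m * (1 - Q ^ (m - k))"
    proof (cases "k < m")
      case True
      then have "q_pochhammer Q (m - k) = q_pochhammer Q (m - Suc k) * (1 - Q ^ (m - k))"
        using q_pochhammer_Suc[of Q "m - Suc k"] by (simp add: Suc_diff_Suc)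
      then show ?thesis
        using Suc.IH[of "Suc k"] True by (simp flip: mult.assoc)
    next
      case False
      then show ?thesis
        using Suc \<open>j \<le> Suc m\<close> by (simp add: gauss_binomial_eq_0)
    qed
    have "gauss_binomial Q m k * q_pochhammer Q (Suc k) * q_pochhammer Q (m - k) =
        (gauss_binomial Q m k * q_pochhammer Q k * q_pochhammer Q (m - k)) * (1 - Q ^ Suc k)"
      by (simp add: q_pochhammer_Suc ac_simps)
    with Suc.IH[of k] Suc \<open>j \<le> Suc m\<close> have right:
      "gauss_binomial Q m k * q_pochhammer Q (Suc k) * q_pochhammer Q (m - k) =
        q_pochhammer Q m * (1 - Q ^ Suc k)"
      by simp
    have "gauss_binomial Q (Suc m) j * q_pochhammer Q j * q_pochhammer Q (Suc m - j) =
        gauss_binomial Q m (Suc k) * q_pochhammer Q (Suc k) * q_pochhammer Q (m - k) +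
        Q ^ (m - k) * (gauss_binomial Q m k * q_pochhammer Q (Suc k) * q_pochhammer Q (m - k))"
      using Suc by (simp add: algebra_simps)
    also have "\<dots> = q_pochhammer Q m * (1 - Q ^ (m - k) * Q ^ Suc k)"
      by (simp only: left right) (simp add: algebra_simps)
    also have "Q ^ (m - k) * Q ^ Suc k = Q ^ Suc m"
      using Suc \<open>j \<le> Suc m\<close> by (simp only: power_add[symmetric]) simp
    finally show ?thesis
      by (simp add: q_pochhammer_Suc)
  qed
qed

lemma q_pochhammer_X_power_cutoff:
  assumes "r > 0" "i \<le> N"
  shows "fps_cutoff (Suc i) (q_pochhammer (fps_X ^ r :: 'a :: comm_ring_1 fps) N) =
    fps_cutoff (Suc i) (q_pochhammer (fps_X ^ r) i)"
  using assms(2)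
proof (induction N rule: dec_induct)
  case (step n)
  have "Suc n \<le> r * Suc n"
    using mult_le_mono1[of 1 r "Suc n"] assms(1) by simp
  then have "Suc i \<le> r * Suc n"
    using step.hyps(1) by linarith
  then have "fps_cutoff (Suc i) (fps_X ^ (r * Suc n) :: 'a fps) = 0"
    using fps_cutoff_X_power_mult[of "Suc i" _ 1] by simp
  then have "fps_cutoff (Suc i) (1 - (fps_X ^ r) ^ Suc n :: 'a fps) = fps_cutoff (Suc i) 1"
    by (simp only: fps_cutoff_diff power_mult[symmetric]) simp
  then show ?case
    using fps_cutoff_mult_cong[OF step.IH] by (simp add: q_pochhammer_Suc)
qed simp

lemma q_pochhammer_X_power_nth_0 [simp]: "r > 0 \<Longrightarrow> q_pochhammer (fps_X ^ r) n $ 0 = 1"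
  using q_pochhammer_X_power_cutoff[of r 0 n]
  by (simp add: fps_cutoff_eq_fps_cutoff_iff)

section \<open>Euler products\<close>

lemma f_nth: "f r $ n = q_pochhammer (fps_X ^ r) n $ n"
  unfolding q_pochhammer_def power_mult[symmetric] by (simp add: f_def prod.atLeast1_atMost_eq)

lemma f_cutoff:
  assumes "r > 0" "i \<le> N"
  shows "fps_cutoff (Suc i) (f r) = fps_cutoff (Suc i) (q_pochhammer (fps_X ^ r) N)"
proof -
  have "f r $ j = q_pochhammer (fps_X ^ r) N $ j" if "j \<le> i" for j
  proof -
    have "fps_cutoff (Suc j) (q_pochhammer (fps_X ^ r :: int fps) N) =
        fps_cutoff (Suc j) (q_pochhammer (fps_X ^ r) j)"
      using assms that by (intro q_pochhammer_X_power_cutoff) auto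
    then show ?thesis
      by (simp add: f_nth fps_cutoff_eq_fps_cutoff_iff)
  qed
  then show ?thesis
    by (simp add: fps_cutoff_eq_fps_cutoff_iff)
qed

lemma f_dilate:
  assumes "r > 0" "k > 0"
  shows "f (k * r) = fps_dilate k (f r)"
proof (rule fps_ext)
  fix n
  have "fps_dilate k (q_pochhammer (fps_X ^ r) n) = q_pochhammer (fps_X ^ (k * r)) n"
    using assms by (simp add: q_pochhammer_def fps_dilate_prod power_mult mult.commute)
  moreover have "q_pochhammer (fps_X ^ r) n $ (n div k) = f r $ (n div k)"
    using f_cutoff[OF assms(1), of "n div k" n] by (simp add: fps_cutoff_eq_fps_cutoff_iff)
  ultimately show "f (k * r) $ n = fps_dilate k (f r) $ n"
    using assms by (metis f_nth fps_dilate_nth)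
qed

definition f_mod2 :: "nat \<Rightarrow> bit fps" where
  "f_mod2 r = fps_map_of_int (f r)"

lemma f_mod2_nth_0 [simp]: "f_mod2 r $ 0 = 1"
  by (simp add: f_mod2_def f_nth)

lemma f_mod2_nonzero [simp]: "f_mod2 r \<noteq> 0"
proof
  assume "f_mod2 r = 0"
  then have "f_mod2 r $ 0 = 0"
    by simp
  then show False
    by simp
qed

lemma f_mod2_cutoff:
  assumes "r > 0" "i \<le> N"
  shows "fps_cutoff (Suc i) (f_mod2 r) = fps_cutoff (Suc i) (q_pochhammer (fps_X ^ r) N)"
proof -
  have "fps_map_of_int (q_pochhammer (fps_X ^ r) N) = q_pochhammer (fps_X ^ r :: bit fps) N"
    by (simp add: q_pochhammer_def)
  moreover have "fps_cutoff (Suc i) (f_mod2 r) = fps_cutoff (Suc i) (fps_map_of_int (q_pochhammer (fps_X ^ r) N))"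
    using f_cutoff[OF assms] by (simp add: f_mod2_def fps_cutoff_eq_fps_cutoff_iff)
  ultimately show ?thesis
    by simp
qed

lemma f_mod2_dilate:
  assumes "r > 0" "k > 0"
  shows "f_mod2 (k * r) = fps_dilate k (f_mod2 r)"
  by (rule fps_ext) (simp add: f_mod2_def f_dilate[OF assms] fps_dilate_nth assms)

lemma f_mod2_double: "r > 0 \<Longrightarrow> f_mod2 (2 * r) = f_mod2 r ^ 2"
  by (simp add: f_mod2_dilate bit_fps_power2_eq_dilate)

section \<open>The Jacobi triple product modulo 2\<close>

text \<open>\<open>theta_exp2 b c t\<close> is twice the exponent \<open>b t (t - 1) / 2 + c t\<close>, kept in \<open>\<int>\<close> to avoid
  division; \<open>theta_mod2 b c\<close> below is the theta series \<open>\<Sum>\<^sub>t q ^ (b t (t - 1) / 2 + c t)\<close> modulo 2.\<close>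
definition theta_exp2 :: "nat \<Rightarrow> nat \<Rightarrow> int \<Rightarrow> int" where
  "theta_exp2 b c t = int b * t * (t - 1) + 2 * int c * t"

lemma theta_exp2_even: "even (theta_exp2 b c t)"
  by (simp add: theta_exp2_def mult.assoc)

lemma abs_le_theta_exp2:
  assumes "0 < c" "c < b"
  shows "2 * \<bar>t\<bar> \<le> theta_exp2 b c t"
proof (cases "t \<ge> 0")
  case True
  have "0 \<le> int b * (t * (t - 1))"
    using True by (cases "t = 0") auto
  moreover have "2 * t \<le> 2 * int c * t"
    using assms True by (simp add: mult_right_mono)
  ultimately show ?thesis
    using True by (simp add: theta_exp2_def algebra_simps)
next
  case False
  define s where "s = - t"
  have "s \<ge> 1"
    using False s_def by simp
  have "int b * (s + 1) \<ge> int b * 2"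
    using \<open>s \<ge> 1\<close> by (intro mult_left_mono) auto
  then have "int b * (s + 1) - 2 * int c \<ge> 2"
    using assms by linarith
  then have "s * (int b * (s + 1) - 2 * int c) \<ge> s * 2"
    using \<open>s \<ge> 1\<close> by (intro mult_left_mono) auto
  moreover have "theta_exp2 b c t = s * (int b * (s + 1) - 2 * int c)"
    by (simp add: theta_exp2_def s_def algebra_simps)
  moreover have "\<bar>t\<bar> = s"
    using False s_def by simp
  ultimately show ?thesis
    by linarith
qed

lemma theta_exp2_inj:
  assumes "0 < c" "c < b" "b \<noteq> 2 * c" "theta_exp2 b c s = theta_exp2 b c t"
  shows "s = t"
proof (rule ccontr)
  assume "s \<noteq> t"
  have "theta_exp2 b c s - theta_exp2 b c t = (s - t) * (int b * (s + t - 1) + 2 * int c)"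
    by (simp add: theta_exp2_def algebra_simps)
  with assms(4) \<open>s \<noteq> t\<close> have eq: "int b * (s + t - 1) = - 2 * int c"
    by simp
  consider "s + t - 1 \<ge> 0" | "s + t - 1 = -1" | "s + t - 1 \<le> -2"
    by linarith
  then show False
  proof cases
    case 1
    then have "int b * (s + t - 1) \<ge> 0"
      by simp
    then show False
      using eq assms(1) by simp
  next
    case 2
    then show False
      using eq assms(3) by simp
  next
    case 3
    then have "int b * (s + t - 1) \<le> int b * (-2)"
      by (intro mult_left_mono) auto
    then show False
      using eq assms(2) by simp
  qed
qed

definition theta_exponent :: "nat \<Rightarrow> nat \<Rightarrow> int \<Rightarrow> nat" where
  "theta_exponent b c t = nat (theta_exp2 b c t div 2)"

lemma two_theta_exponent:
  assumes "0 < c" "c < b"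
  shows "2 * int (theta_exponent b c t) = theta_exp2 b c t"
  using abs_le_theta_exp2[OF assms, of t] theta_exp2_even[of b c t]
  by (simp add: theta_exponent_def)

lemma jtp_exponent_identity:
  assumes "0 < c" "c < b" "1 \<le> n" "j \<le> 2 * n"
  shows "b * (j choose 2) + (b * n - c) * (2 * n - j) =
    b * (n choose 2) + n * (b * n - c) + theta_exponent b c (int j - int n)"
proof -
  have choose: "2 * int (m choose 2) = int m * (int m - 1)" for m
    using arg_cong[OF two_mult_choose_two[of m], of int] by (cases m) (simp_all add: algebra_simps)
  have "b \<le> b * n"
    using assms(3) by simp
  then have "c \<le> b * n"
    using assms(2) by linarith
  then have diff: "int (b * n - c) = int b * int n - int c" "int (2 * n - j) = 2 * int n - int j"
    using assms(4) by simp_all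
  have "2 * (int b * int (j choose 2) + (int b * int n - int c) * (2 * int n - int j)) =
      2 * (int b * int (n choose 2) + int n * (int b * int n - int c) +
        int (theta_exponent b c (int j - int n)))"
    unfolding distrib_left[of 2] two_theta_exponent[OF assms(1,2)] theta_exp2_def
    by (simp only: mult.left_commute[of 2] choose) (simp add: algebra_simps)
  then have "int (b * (j choose 2) + (b * n - c) * (2 * n - j)) =
      int (b * (n choose 2) + n * (b * n - c) + theta_exponent b c (int j - int n))"
    by (simp only: of_nat_add of_nat_mult diff) simp
  then show ?thesis
    by (simp only: of_nat_eq_iff)
qed

text \<open>Together with \<open>q_pochhammer (fps_X ^ b) n\<close>, this truncates the product side
  \<open>\<Prod>\<^sub>k\<^sub>\<ge>\<^sub>1 (1 - q ^ (b k)) (1 + q ^ (b k - c)) (1 + q ^ (b (k - 1) + c))\<close> of the Jacobi triple product.\<close>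
definition jtp_product :: "nat \<Rightarrow> nat \<Rightarrow> nat \<Rightarrow> 'a :: comm_ring_1 fps" where
  "jtp_product b c n = (\<Prod>k<n. (1 + fps_X ^ (b * k + (b - c))) * (1 + fps_X ^ (b * k + c)))"

lemma jtp_product_0 [simp]: "jtp_product b c 0 = 1"
  by (simp add: jtp_product_def)

lemma jtp_product_Suc:
  "jtp_product b c (Suc n) = jtp_product b c n * ((1 + fps_X ^ (b * n + (b - c))) * (1 + fps_X ^ (b * n + c)))"
  by (simp add: jtp_product_def)

lemma prod_shifted_eq_jtp_product:
  assumes "0 < c" "c < b" "1 \<le> n"
  shows "(\<Prod>i<2*n. fps_X ^ (b * n - c) + (fps_X ^ b) ^ i :: 'a :: comm_ring_1 fps) =
    fps_X ^ (b * (n choose 2) + n * (b * n - c)) * jtp_product b c n"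
proof -
  define h :: "nat \<Rightarrow> 'a fps" where "h i = fps_X ^ (b * n - c) + (fps_X ^ b) ^ i" for i
  have low: "h i = fps_X ^ (b * i) * (1 + fps_X ^ (b * (n - Suc i) + (b - c)))" if "i < n" for i
  proof -
    have "b * (n - Suc i) + b * Suc i = b * n"
      using that by (simp only: add_mult_distrib2[symmetric]) simp
    then have "b * i + (b * (n - Suc i) + (b - c)) = b * n - c"
      using assms(2) by simp
    then show ?thesis
      by (simp add: h_def distrib_left add.commute flip: power_add power_mult)
  qed
  have high: "h (n + i) = fps_X ^ (b * n - c) * (1 + fps_X ^ (b * i + c))" for i
  proof -
    have "b \<le> b * n"
      using assms(3) by simp
    then have "b * n - c + (b * i + c) = b * (n + i)"
      using assms(2) by (simp only: add_mult_distrib2)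
    then show ?thesis
      by (simp add: h_def distrib_left flip: power_add power_mult)
  qed
  have "prod h {..<n + m} = prod h {..<n} * (\<Prod>i<m. h (n + i))" for m
    by (induction m) (simp_all add: ac_simps)
  then have "prod h {..<2*n} = prod h {..<n} * (\<Prod>i<n. h (n + i))"
    by (simp add: mult_2)
  also have "prod h {..<n} = fps_X ^ (b * (n choose 2)) * (\<Prod>k<n. 1 + fps_X ^ (b * k + (b - c)))"
  proof -
    have "(\<Prod>i<n. fps_X ^ (b * i) :: 'a fps) = fps_X ^ (b * (n choose 2))"
      by (simp add: sum_distrib_left flip: sum_lessThan_eq_choose_two power_sum)
    then show ?thesis
      by (simp add: low prod.distrib
          prod.nat_diff_reindex[where g = "\<lambda>k. 1 + fps_X ^ (b * k + (b - c))"])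
  qed
  also have "(\<Prod>i<n. h (n + i)) = fps_X ^ (n * (b * n - c)) * (\<Prod>k<n. 1 + fps_X ^ (b * k + c))"
    by (simp add: high prod.distrib flip: power_mult) (simp add: mult.commute)
  finally show ?thesis
    by (simp add: h_def jtp_product_def prod.distrib power_add ac_simps)
qed

text \<open>Cauchy's q-binomial theorem with \<open>Q = q ^ b\<close>, \<open>x = q ^ (b n - c)\<close> and \<open>y = 1\<close>.\<close>
theorem finite_jtp:
  assumes "0 < c" "c < b" "1 \<le> n"
  shows "jtp_product b c n =
    (\<Sum>j\<le>2*n. gauss_binomial (fps_X ^ b) (2*n) j * fps_X ^ theta_exponent b c (int j - int n)
      :: 'a :: comm_ring_1 fps)"
proof -
  define K where "K = b * (n choose 2) + n * (b * n - c)"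
  define S :: "'a fps" where
    "S = (\<Sum>j\<le>2*n. gauss_binomial (fps_X ^ b) (2*n) j * fps_X ^ theta_exponent b c (int j - int n))"
  have "jtp_product b c n * fps_X ^ K = (\<Prod>i<2*n. fps_X ^ (b * n - c) + 1 * (fps_X ^ b) ^ i :: 'a fps)"
    using prod_shifted_eq_jtp_product[OF assms, symmetric] by (simp add: K_def mult.commute)
  also have "\<dots> = (\<Sum>j\<le>2*n. gauss_binomial (fps_X ^ b) (2*n) j * (fps_X ^ b) ^ (j choose 2) *
      1 ^ j * (fps_X ^ (b * n - c)) ^ (2 * n - j))"
    by (rule q_binomial_theorem)
  also have "\<dots> = S * fps_X ^ K"
    unfolding S_def sum_distrib_right
  proof (rule sum.cong)
    fix j
    assume "j \<in> {..2*n}"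
    then have "b * (j choose 2) + (b * n - c) * (2 * n - j) = theta_exponent b c (int j - int n) + K"
      using jtp_exponent_identity[OF assms] by (simp add: K_def)
    then show "gauss_binomial (fps_X ^ b) (2*n) j * (fps_X ^ b) ^ (j choose 2) * 1 ^ j *
        (fps_X ^ (b * n - c)) ^ (2 * n - j) =
        gauss_binomial (fps_X ^ b) (2*n) j * fps_X ^ theta_exponent b c (int j - int n) * fps_X ^ K"
      by (simp add: mult.assoc flip: power_mult power_add)
  qed simp
  finally show ?thesis
    by (metis S_def fps_shift_times_fps_X_power')
qed

lemma gauss_binomial_mult_q_pochhammer_cutoff:
  assumes "b > 0" "i \<le> j" "i \<le> m - j" "j \<le> m" "i \<le> n"
  shows "fps_cutoff (Suc i) (gauss_binomial (fps_X ^ b) m j * q_pochhammer (fps_X ^ b) n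
    :: 'a :: field fps) = fps_cutoff (Suc i) 1"
proof -
  define P :: "nat \<Rightarrow> 'a fps" where "P = q_pochhammer (fps_X ^ b)"
  have trunc: "fps_cutoff (Suc i) (P l) = fps_cutoff (Suc i) (P i)" if "i \<le> l" for l
    unfolding P_def using assms(1) that by (rule q_pochhammer_X_power_cutoff)
  have "fps_cutoff (Suc i) (gauss_binomial (fps_X ^ b) m j * P i * P i) =
      fps_cutoff (Suc i) (gauss_binomial (fps_X ^ b) m j * P j * P (m - j))"
    using assms by (intro fps_cutoff_mult_cong refl trunc[symmetric])
  also have "\<dots> = fps_cutoff (Suc i) (1 * P i)"
    using assms trunc[of m] by (simp add: P_def gauss_binomial_mult_q_pochhammer)
  finally have "fps_cutoff (Suc i) (gauss_binomial (fps_X ^ b) m j * P i) = fps_cutoff (Suc i) 1"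
    by (rule fps_cutoff_mult_right_cancel) (simp add: P_def assms(1))
  moreover have "fps_cutoff (Suc i) (gauss_binomial (fps_X ^ b) m j * P n) =
      fps_cutoff (Suc i) (gauss_binomial (fps_X ^ b) m j * P i)"
    using assms(5) by (intro fps_cutoff_mult_cong refl trunc)
  ultimately show ?thesis
    by (simp add: P_def)
qed

definition theta_mod2 :: "nat \<Rightarrow> nat \<Rightarrow> bit fps" where
  "theta_mod2 b c = Abs_fps (\<lambda>i. of_bool (\<exists>t. theta_exp2 b c t = 2 * int i))"

lemma theta_mod2_nth: "theta_mod2 b c $ i = of_bool (\<exists>t. theta_exp2 b c t = 2 * int i)"
  by (simp add: theta_mod2_def)

lemma sum_X_power_theta_exponent_nth:
  assumes "0 < c" "c < b" "b \<noteq> 2 * c" "i \<le> n"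
  shows "(\<Sum>j\<le>2*n. fps_X ^ theta_exponent b c (int j - int n) :: bit fps) $ i = theta_mod2 b c $ i"
proof (cases "\<exists>t. theta_exp2 b c t = 2 * int i")
  case True
  then obtain t where t: "theta_exp2 b c t = 2 * int i"
    by blast
  then have "\<bar>t\<bar> \<le> int i"
    using abs_le_theta_exp2[OF assms(1,2), of t] by simp
  define j0 where "j0 = nat (t + int n)"
  have j0: "int j0 = t + int n" "j0 \<le> 2 * n"
    using \<open>\<bar>t\<bar> \<le> int i\<close> assms(4) by (auto simp: j0_def)
  have iff: "theta_exponent b c (int j - int n) = i \<longleftrightarrow> j = j0" for j
  proof -
    have "theta_exponent b c (int j - int n) = i \<longleftrightarrow> theta_exp2 b c (int j - int n) = theta_exp2 b c t"
      using two_theta_exponent[OF assms(1,2), of "int j - int n"] t by linarith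
    also have "\<dots> \<longleftrightarrow> int j - int n = t"
      using theta_exp2_inj[OF assms(1-3)] by blast
    finally show ?thesis
      using j0(1) by linarith
  qed
  have "(\<Sum>j\<le>2*n. fps_X ^ theta_exponent b c (int j - int n) :: bit fps) $ i =
      (\<Sum>j\<le>2*n. if j = j0 then 1 else 0)"
    unfolding fps_sum_nth by (intro sum.cong refl) (auto simp: iff[symmetric])
  also have "\<dots> = 1"
    using j0(2) by simp
  finally show ?thesis
    using True by (simp add: theta_mod2_nth)
next
  case False
  have "theta_exponent b c (int j - int n) \<noteq> i" for j
    using False two_theta_exponent[OF assms(1,2), of "int j - int n"] by auto
  then have "(\<Sum>j\<le>2*n. fps_X ^ theta_exponent b c (int j - int n) :: bit fps) $ i = 0"
    unfolding fps_sum_nth by (intro sum.neutral) auto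
  then show ?thesis
    using False by (simp add: theta_mod2_nth)
qed

text \<open>Below degree \<open>i + 1\<close>, the factor \<open>q_pochhammer (fps_X ^ b) n\<close> cancels the Gaussian binomial of
  every summand of \<open>finite_jtp\<close> whose exponent is at most \<open>i\<close>.\<close>
theorem jtp_mod2_nth:
  assumes "0 < c" "c < b" "b \<noteq> 2 * c" "2 * i < n"
  shows "theta_mod2 b c $ i = (q_pochhammer (fps_X ^ b) n * jtp_product b c n) $ i"
proof -
  define E where "E j = theta_exponent b c (int j - int n)" for j
  define G :: "nat \<Rightarrow> bit fps" where "G j = gauss_binomial (fps_X ^ b) (2 * n) j" for j
  have summand: "fps_cutoff (Suc i) (G j * q_pochhammer (fps_X ^ b) n * fps_X ^ E j) =
      fps_cutoff (Suc i) (fps_X ^ E j :: bit fps)" if "j \<le> 2 * n" for j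
  proof (cases "i < E j")
    case True
    then show ?thesis
      using fps_cutoff_X_power_mult[of "Suc i" "E j" "G j * q_pochhammer (fps_X ^ b) n"]
        fps_cutoff_X_power_mult[of "Suc i" "E j" 1] by (simp add: mult.commute)
  next
    case False
    have "2 * \<bar>int j - int n\<bar> \<le> 2 * int (E j)"
      using abs_le_theta_exp2[OF assms(1,2)] by (simp add: E_def two_theta_exponent[OF assms(1,2)])
    moreover have "int (E j) \<le> int i"
      using False by simp
    ultimately have "\<bar>int j - int n\<bar> \<le> int i"
      by simp
    then have "fps_cutoff (Suc i) (G j * q_pochhammer (fps_X ^ b) n) = fps_cutoff (Suc i) 1"
      unfolding G_def using assms that by (intro gauss_binomial_mult_q_pochhammer_cutoff) auto
    from fps_cutoff_mult_cong[OF this refl, of "fps_X ^ E j"] show ?thesis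
      by simp
  qed
  have expand: "q_pochhammer (fps_X ^ b) n * jtp_product b c n =
      (\<Sum>j\<le>2*n. G j * q_pochhammer (fps_X ^ b) n * fps_X ^ E j)"
    using assms by (simp add: finite_jtp sum_distrib_left G_def E_def ac_simps)
  have "fps_cutoff (Suc i) (q_pochhammer (fps_X ^ b) n * jtp_product b c n) =
      fps_cutoff (Suc i) (\<Sum>j\<le>2*n. fps_X ^ E j :: bit fps)"
    unfolding expand by (rule fps_cutoff_sum_cong) (simp add: summand)
  then have "(q_pochhammer (fps_X ^ b) n * jtp_product b c n) $ i = (\<Sum>j\<le>2*n. fps_X ^ E j :: bit fps) $ i"
    by (simp add: fps_cutoff_eq_fps_cutoff_iff)
  then show ?thesis
    using sum_X_power_theta_exponent_nth[OF assms(1-3), of i n] assms(4) by (simp add: E_def)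
qed

lemma q_pochhammer_Suc_bit: "q_pochhammer (Q :: bit fps) (Suc n) = q_pochhammer Q n * (1 + Q ^ Suc n)"
  by (simp add: q_pochhammer_Suc bit_fps_minus_eq_add)

lemma q_pochhammer_X_power_Suc_bit:
  "q_pochhammer (fps_X ^ b :: bit fps) (Suc n) = q_pochhammer (fps_X ^ b) n * (1 + fps_X ^ (b * n + b))"
  by (simp add: q_pochhammer_Suc_bit add.commute del: power_Suc flip: power_mult)

lemma jtp_product_3_1: "q_pochhammer (fps_X ^ 3) n * jtp_product 3 1 n = q_pochhammer (fps_X :: bit fps) (3 * n)"
proof (induction n)
  case (Suc n)
  have "q_pochhammer (fps_X :: bit fps) (3 * Suc n) =
      q_pochhammer fps_X (3 * n) * (1 + fps_X ^ (3 * n + 1)) * (1 + fps_X ^ (3 * n + 2)) *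
        (1 + fps_X ^ (3 * n + 3))"
  proof -
    have "3 * Suc n = Suc (Suc (Suc (3 * n)))"
      by simp
    then show ?thesis
      by (simp only: q_pochhammer_Suc_bit) (simp add: numeral_3_eq_3)
  qed
  also have "\<dots> = (q_pochhammer (fps_X ^ 3) n * jtp_product 3 1 n) *
      ((1 + fps_X ^ (3 * n + 3)) * ((1 + fps_X ^ (3 * n + 2)) * (1 + fps_X ^ (3 * n + 1))))"
    by (simp only: Suc.IH) (simp only: ac_simps)
  also have "\<dots> = q_pochhammer (fps_X ^ 3) (Suc n) * jtp_product 3 1 (Suc n)"
    by (simp only: q_pochhammer_X_power_Suc_bit jtp_product_Suc) (simp add: ac_simps)
  finally show ?case ..
qed simp

lemma jtp_product_4_1:
  "jtp_product 4 1 n * q_pochhammer (fps_X ^ 2) (2 * n) = q_pochhammer (fps_X :: bit fps) (4 * n)"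
proof (induction n)
  case (Suc n)
  have "q_pochhammer (fps_X :: bit fps) (4 * Suc n) =
      q_pochhammer fps_X (4 * n) * (1 + fps_X ^ (4 * n + 1)) * (1 + fps_X ^ (4 * n + 2)) *
        (1 + fps_X ^ (4 * n + 3)) * (1 + fps_X ^ (4 * n + 4))"
  proof -
    have "4 * Suc n = Suc (Suc (Suc (Suc (4 * n))))"
      by simp
    then show ?thesis
      by (simp only: q_pochhammer_Suc_bit) (simp add: numeral_Bit0 numeral_3_eq_3)
  qed
  also have "\<dots> = (jtp_product 4 1 n * q_pochhammer (fps_X ^ 2) (2 * n)) *
      ((1 + fps_X ^ (4 * n + 3)) * (1 + fps_X ^ (4 * n + 1)) *
        ((1 + fps_X ^ (4 * n + 2)) * (1 + fps_X ^ (4 * n + 4))))"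
    by (simp only: Suc.IH) (simp only: ac_simps)
  also have "\<dots> = jtp_product 4 1 (Suc n) * q_pochhammer (fps_X ^ 2) (2 * Suc n)"
  proof -
    have "2 * Suc n = Suc (Suc (2 * n))"
      by simp
    then show ?thesis
      by (simp only: q_pochhammer_X_power_Suc_bit jtp_product_Suc) (simp add: ac_simps del: power_Suc)
  qed
  finally show ?case ..
qed simp

theorem euler_pentagonal_mod2: "theta_mod2 3 1 = f_mod2 1"
proof (rule fps_ext)
  fix i :: nat
  define n where "n = 2 * i + 1"
  have "theta_mod2 3 1 $ i = (q_pochhammer (fps_X ^ 3) n * jtp_product 3 1 n) $ i"
    by (rule jtp_mod2_nth) (simp_all add: n_def)
  also have "\<dots> = q_pochhammer fps_X (3 * n) $ i"
    by (simp only: jtp_product_3_1)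
  also have "\<dots> = f_mod2 1 $ i"
    using f_mod2_cutoff[of 1 i "3 * n"] by (simp add: n_def fps_cutoff_eq_fps_cutoff_iff)
  finally show "theta_mod2 3 1 $ i = f_mod2 1 $ i" .
qed

text \<open>Here the product side is \<open>f\<^sub>4 f\<^sub>1 / f\<^sub>2\<close>, which is \<open>f\<^sub>1\<^sup>3\<close> modulo 2.\<close>
theorem jacobi_cube_mod2: "theta_mod2 4 1 = f_mod2 1 ^ 3"
proof -
  have "theta_mod2 4 1 * f_mod2 2 = f_mod2 4 * f_mod2 1"
  proof (rule fps_eqI_cutoff)
    fix i :: nat
    define n where "n = 2 * i + 1"
    have "fps_cutoff (Suc i) (theta_mod2 4 1) =
        fps_cutoff (Suc i) (q_pochhammer (fps_X ^ 4) n * jtp_product 4 1 n)"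
      unfolding fps_cutoff_eq_fps_cutoff_iff by (auto simp: n_def intro!: jtp_mod2_nth)
    then have "fps_cutoff (Suc i) (theta_mod2 4 1 * f_mod2 2) =
        fps_cutoff (Suc i) (q_pochhammer (fps_X ^ 4) n * (jtp_product 4 1 n * q_pochhammer (fps_X ^ 2) (2 * n)))"
      unfolding mult.assoc[symmetric] by (intro fps_cutoff_mult_cong f_mod2_cutoff) (simp_all add: n_def)
    also have "\<dots> = fps_cutoff (Suc i) (q_pochhammer (fps_X ^ 4) n * q_pochhammer (fps_X ^ 1) (4 * n))"
      by (simp only: jtp_product_4_1 power_one_right)
    also have "\<dots> = fps_cutoff (Suc i) (f_mod2 4 * f_mod2 1)"
      by (intro fps_cutoff_mult_cong f_mod2_cutoff[symmetric]) (simp_all add: n_def)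
    finally show "fps_cutoff (Suc i) (theta_mod2 4 1 * f_mod2 2) = fps_cutoff (Suc i) (f_mod2 4 * f_mod2 1)" .
  qed
  moreover have "f_mod2 2 = f_mod2 1 ^ 2" "f_mod2 4 = f_mod2 1 ^ 4"
    using f_mod2_double[of 1] f_mod2_double[of 2] by (simp_all flip: power_mult)
  ultimately have "theta_mod2 4 1 * f_mod2 1 ^ 2 = f_mod2 1 ^ 3 * f_mod2 1 ^ 2"
    by (simp add: power_add[symmetric] numeral_Bit0 numeral_3_eq_3 ac_simps)
  then show ?thesis
    by (rule mult_right_cancel[THEN iffD1, rotated]) simp
qed

section \<open>Dissections of \<open>f\<^sub>1\<^sup>3\<close> modulo 2\<close>

lemma X_power_mult_dilate_theta_mod2_nth:
  assumes "0 < c" "c < b" "k > 0"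
  shows "(fps_X ^ r * fps_dilate k (theta_mod2 b c)) $ i =
    of_bool (\<exists>t. 2 * int r + int k * theta_exp2 b c t = 2 * int i)"
proof -
  have "(fps_X ^ r * fps_dilate k (theta_mod2 b c)) $ i =
      of_bool (r \<le> i \<and> k dvd (i - r) \<and> (\<exists>t. theta_exp2 b c t = 2 * int ((i - r) div k)))"
    using assms(3) by (simp add: fps_X_power_mult_nth fps_dilate_nth theta_mod2_nth)
  also have "(r \<le> i \<and> k dvd (i - r) \<and> (\<exists>t. theta_exp2 b c t = 2 * int ((i - r) div k))) \<longleftrightarrow>
      (\<exists>t. 2 * int r + int k * theta_exp2 b c t = 2 * int i)" (is "?lhs \<longleftrightarrow> ?rhs")
  proof
    assume ?lhs
    then obtain t m where "i = r + k * m" "theta_exp2 b c t = 2 * int m"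
      by (metis dvd_div_mult_self le_add_diff_inverse mult.commute)
    then show ?rhs
      by (auto simp: algebra_simps)
  next
    assume ?rhs
    then obtain t where t: "2 * int r + int k * theta_exp2 b c t = 2 * int i"
      by blast
    define m where "m = nat (theta_exp2 b c t div 2)"
    have "2 * int m = theta_exp2 b c t"
      using abs_le_theta_exp2[OF assms(1,2), of t] theta_exp2_even[of b c t] by (simp add: m_def)
    with t have "i = r + k * m"
      by (metis mult.left_commute mult_cancel_left of_nat_add of_nat_eq_iff of_nat_mult
          distrib_left zero_neq_numeral)
    then show ?lhs
      using \<open>2 * int m = theta_exp2 b c t\<close> assms(3) by auto
  qed
  finally show ?thesis .
qed

lemma theta_exp2_4_1_cases:
  "(\<exists>t. theta_exp2 4 1 t = n) \<longleftrightarrow>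
    (\<exists>s. 3 * theta_exp2 3 1 s = n) \<or> (\<exists>u. 2 + 9 * theta_exp2 4 1 u = n)"
proof
  assume "\<exists>t. theta_exp2 4 1 t = n"
  then obtain t where t: "theta_exp2 4 1 t = n"
    by blast
  have "\<exists>m. t = 3 * m \<or> t = 3 * m + 1 \<or> t = 3 * m + 2"
    by presburger
  then obtain m where "t = 3 * m \<or> t = 3 * m + 1 \<or> t = 3 * m + 2"
    by blast
  moreover have "theta_exp2 4 1 (3 * m) = 3 * theta_exp2 3 1 (2 * m)"
    "theta_exp2 4 1 (3 * m + 1) = 2 + 9 * theta_exp2 4 1 (- m)"
    "theta_exp2 4 1 (3 * m + 2) = 3 * theta_exp2 3 1 (- 2 * m - 1)"
    by (simp_all add: theta_exp2_def algebra_simps)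
  ultimately show "(\<exists>s. 3 * theta_exp2 3 1 s = n) \<or> (\<exists>u. 2 + 9 * theta_exp2 4 1 u = n)"
    using t by metis
next
  have s: "3 * theta_exp2 3 1 (2 * m) = theta_exp2 4 1 (3 * m)"
    "3 * theta_exp2 3 1 (2 * m + 1) = theta_exp2 4 1 (- 3 * m - 1)"
    "2 + 9 * theta_exp2 4 1 u = theta_exp2 4 1 (1 - 3 * u)" for m u
    by (simp_all add: theta_exp2_def algebra_simps)
  assume "(\<exists>s. 3 * theta_exp2 3 1 s = n) \<or> (\<exists>u. 2 + 9 * theta_exp2 4 1 u = n)"
  moreover have "\<exists>m. s = 2 * m \<or> s = 2 * m + 1" for s :: int
    by presburger
  ultimately show "\<exists>t. theta_exp2 4 1 t = n"
    using s by metis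
qed

lemma jacobi_theta_mod2_3dissection:
  "theta_mod2 4 1 = fps_dilate 3 (theta_mod2 3 1) + fps_X * fps_dilate 9 (theta_mod2 4 1)"
proof (rule fps_ext)
  fix i
  define B1 where "B1 = (\<exists>s. 3 * theta_exp2 3 1 s = 2 * int i)"
  define B2 where "B2 = (\<exists>u. 2 + 9 * theta_exp2 4 1 u = 2 * int i)"
  have "\<not> (3 * x = 2 * int i \<and> 2 + 9 * y = 2 * int i)" for x y
    by presburger
  then have "\<not> (B1 \<and> B2)"
    unfolding B1_def B2_def by blast
  then have "of_bool (B1 \<or> B2) = (of_bool B1 + of_bool B2 :: bit)"
    by (cases B1; cases B2) simp_all
  then have "theta_mod2 4 1 $ i = of_bool B1 + of_bool B2"
    by (simp only: theta_mod2_nth theta_exp2_4_1_cases B1_def B2_def)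
  also have "\<dots> = (fps_X ^ 0 * fps_dilate 3 (theta_mod2 3 1)) $ i + (fps_X ^ 1 * fps_dilate 9 (theta_mod2 4 1)) $ i"
    by (simp only: X_power_mult_dilate_theta_mod2_nth) (simp add: B1_def B2_def)
  finally show "theta_mod2 4 1 $ i = (fps_dilate 3 (theta_mod2 3 1) + fps_X * fps_dilate 9 (theta_mod2 4 1)) $ i"
    by (simp only: fps_add_nth power_0 power_one_right mult_1)
qed

theorem f_mod2_cube_3dissection: "f_mod2 1 ^ 3 = f_mod2 3 + fps_X * f_mod2 9 ^ 3"
proof -
  have "fps_dilate 3 (f_mod2 1) = f_mod2 3" "fps_dilate 9 (f_mod2 1 ^ 3) = f_mod2 9 ^ 3"
    using f_mod2_dilate[of 1 3] f_mod2_dilate[of 1 9] by simp_all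
  moreover have "f_mod2 1 ^ 3 = fps_dilate 3 (f_mod2 1) + fps_X * fps_dilate 9 (f_mod2 1 ^ 3)"
    using jacobi_theta_mod2_3dissection unfolding euler_pentagonal_mod2 jacobi_cube_mod2 .
  ultimately show ?thesis
    by simp
qed

text \<open>The difference \<open>D\<close> of the two sides satisfies \<open>D = q D(q\<^sup>3)\<close>, which forces \<open>D = 0\<close>.\<close>
theorem f_mod2_cube_product: "f_mod2 1 ^ 3 * f_mod2 3 ^ 3 = f_mod2 4 ^ 3 + fps_X * f_mod2 12 ^ 3"
proof -
  have dil3: "fps_dilate 3 (f_mod2 r) = f_mod2 (3 * r)" and dil4: "fps_dilate 4 (f_mod2 r) = f_mod2 (4 * r)"
    if "r > 0" for r
    using f_mod2_dilate[of r 3] f_mod2_dilate[of r 4] that by simp_all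
  have J: "f_mod2 1 ^ 3 = f_mod2 3 + fps_X * f_mod2 9 ^ 3"
    by (rule f_mod2_cube_3dissection)
  have J4: "f_mod2 4 ^ 3 = f_mod2 12 + fps_X ^ 4 * f_mod2 36 ^ 3"
    using arg_cong[OF J, of "fps_dilate 4"] by (simp add: dil4)
  have "f_mod2 3 ^ 4 = f_mod2 12"
    using f_mod2_double[of 3] f_mod2_double[of 6] by (simp flip: power_mult)
  define D where "D = f_mod2 1 ^ 3 * f_mod2 3 ^ 3 + f_mod2 4 ^ 3 + fps_X * f_mod2 12 ^ 3"
  have dilD: "fps_dilate 3 D = f_mod2 3 ^ 3 * f_mod2 9 ^ 3 + f_mod2 12 ^ 3 + fps_X ^ 3 * f_mod2 36 ^ 3"
    by (simp add: D_def dil3)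
  have "D = fps_X * fps_dilate 3 D + (f_mod2 3 ^ 4 + f_mod2 12)"
    unfolding dilD unfolding D_def J J4 by algebra
  also have "f_mod2 3 ^ 4 + f_mod2 12 = 0"
    by (simp add: \<open>f_mod2 3 ^ 4 = f_mod2 12\<close> bit_fps_add_self)
  finally have "D = 0"
    by (intro fps_eq_0_if_eq_X_mult_dilate[of 3]) simp_all
  moreover have "f_mod2 1 ^ 3 * f_mod2 3 ^ 3 = D - (f_mod2 4 ^ 3 + fps_X * f_mod2 12 ^ 3)"
    by (simp add: D_def algebra_simps)
  ultimately show ?thesis
    by (simp add: bit_fps_minus_eq_add)
qed

section \<open>Extracting the progression \<open>24 n + 13\<close>\<close>

lemma fps_section_4_1_dilate_mult_cube:
  fixes P Q R :: "bit fps"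
  shows "fps_section 4 1 (fps_dilate 4 R * (fps_dilate 4 P + fps_X * fps_dilate 4 Q) ^ 3) = R * P ^ 2 * Q"
proof -
  have "fps_dilate 4 R * (fps_dilate 4 P + fps_X * fps_dilate 4 Q) ^ 3 =
      fps_X ^ 0 * fps_dilate 4 (R * P ^ 3) + fps_X ^ 1 * fps_dilate 4 (R * P ^ 2 * Q) +
      fps_X ^ 2 * fps_dilate 4 (R * P * Q ^ 2) + fps_X ^ 3 * fps_dilate 4 (R * Q ^ 3)"
    using bit_fps_add_self[of 1]
    by (simp add: bit_fps_power3_add algebra_simps power2_eq_square power3_eq_cube)
  then show ?thesis
    by (simp only: fps_section_add fps_section_X_power_dilate) simp
qed

text \<open>With \<open>D = f\<^sub>1\<^sup>3 f\<^sub>3\<^sup>3 = f\<^sub>4\<^sup>3 + q f\<^sub>1\<^sub>2\<^sup>3\<close> we have \<open>D\<^sup>4 = D(q\<^sup>4)\<close> and \<open>A D\<^sup>4 = f\<^sub>1\<^sub>2 D\<^sup>3\<close>.\<close>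
lemma fps_section_4_1_of_f_mod2_quotient:
  assumes "A * f_mod2 1 ^ 3 = f_mod2 3"
  shows "fps_section 4 1 A = f_mod2 1 ^ 3 * f_mod2 3"
proof -
  have f4: "fps_dilate 4 (f_mod2 r) = f_mod2 (4 * r)" if "r > 0" for r
    using f_mod2_dilate[of r 4] that by simp
  define D where "D = f_mod2 1 ^ 3 * f_mod2 3 ^ 3"
  have D: "D = fps_dilate 4 (f_mod2 1 ^ 3) + fps_X * fps_dilate 4 (f_mod2 3 ^ 3)"
    using f_mod2_cube_product by (simp add: D_def f4)
  have "A * D = (A * f_mod2 1 ^ 3) * f_mod2 3 ^ 3"
    by (simp add: D_def ac_simps)
  also have "\<dots> = f_mod2 3 ^ 4"
    by (simp only: assms power_Suc[symmetric]) simp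
  finally have "A * D = f_mod2 3 ^ 4" .
  have "A * fps_dilate 4 D = (A * D) * D ^ 3"
    unfolding bit_fps_power4_eq_dilate[symmetric] by (simp add: eval_nat_numeral ac_simps)
  also have "\<dots> = fps_dilate 4 (f_mod2 3) * D ^ 3"
    by (simp only: \<open>A * D = f_mod2 3 ^ 4\<close> bit_fps_power4_eq_dilate)
  finally have "A * fps_dilate 4 D = fps_dilate 4 (f_mod2 3) * D ^ 3" .
  have "fps_section 4 1 A * D = fps_section 4 1 (A * fps_dilate 4 D)"
    by (rule fps_section_mult_dilate[symmetric]) simp
  also have "\<dots> = fps_section 4 1 (fps_dilate 4 (f_mod2 3) * D ^ 3)"
    by (simp only: \<open>A * fps_dilate 4 D = fps_dilate 4 (f_mod2 3) * D ^ 3\<close>)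
  also have "\<dots> = f_mod2 3 * (f_mod2 1 ^ 3) ^ 2 * f_mod2 3 ^ 3"
    unfolding D by (rule fps_section_4_1_dilate_mult_cube)
  also have "\<dots> = (f_mod2 1 ^ 3 * f_mod2 3) * D"
    by (simp add: D_def algebra_simps power2_eq_square)
  finally show ?thesis
    by (simp add: D_def)
qed

lemma fps_section_3_0_f_mod2_cube_mult: "fps_section 3 0 (f_mod2 1 ^ 3 * f_mod2 3) = f_mod2 1 ^ 2"
proof -
  have f3: "fps_dilate 3 (f_mod2 r) = f_mod2 (3 * r)" if "r > 0" for r
    using f_mod2_dilate[of r 3] that by simp
  have "f_mod2 1 ^ 3 * f_mod2 3 = fps_X ^ 0 * fps_dilate 3 (f_mod2 1 ^ 2) +
      fps_X ^ 1 * fps_dilate 3 (f_mod2 3 ^ 3 * f_mod2 1)"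
    unfolding f_mod2_cube_3dissection by (simp add: f3 algebra_simps power2_eq_square del: One_nat_def)
  then show ?thesis
    by (simp only: fps_section_add fps_section_X_power_dilate) simp
qed

lemma bit_fps_section_2_1_square: "fps_section 2 1 ((F :: bit fps) ^ 2) = 0"
  using fps_section_X_power_dilate[of 1 2 0 F] by (simp add: bit_fps_power2_eq_dilate)

lemma generating_function_mod2:
  assumes "Abs_fps a * (f 2) ^ 2 * f 3 = f 1 * f 6"
  shows "fps_map_of_int (Abs_fps a) * f_mod2 1 ^ 3 = f_mod2 3"
proof -
  define A :: "bit fps" where "A = fps_map_of_int (Abs_fps a)"
  have "A * f_mod2 2 ^ 2 * f_mod2 3 = f_mod2 1 * f_mod2 6"
    using arg_cong[OF assms, of fps_map_of_int] by (simp add: A_def f_mod2_def)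
  then have "(A * f_mod2 1 ^ 3) * (f_mod2 1 * f_mod2 3) = f_mod2 3 * (f_mod2 1 * f_mod2 3)"
    using f_mod2_double[of 1] f_mod2_double[of 3] by (simp add: algebra_simps eval_nat_numeral)
  then show ?thesis
    by (simp add: A_def)
qed

theorem mainTheorem4:
  fixes a :: "nat \<Rightarrow> int"
  assumes gen: "Abs_fps a * (f 2)^2 * f 3 = f 1 * f 6"
  shows "\<forall>n. even (a (24 * n + 13))"
proof
  fix n
  define A :: "bit fps" where "A = fps_map_of_int (Abs_fps a)"
  have "fps_section 24 13 A = fps_section 2 1 (fps_section 3 0 (fps_section 4 1 A))"
    by (simp add: fps_section_section)
  also have "\<dots> = 0"
    using generating_function_mod2[OF gen, folded A_def]
    by (simp only: fps_section_4_1_of_f_mod2_quotient fps_section_3_0_f_mod2_cube_mult bit_fps_section_2_1_square)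
  finally have "(of_int (a (24 * n + 13)) :: bit) = 0"
    using fps_section_nth[of 24 13 A n] by (simp add: A_def)
  then show "even (a (24 * n + 13))"
    by (simp add: of_int_bit_eq_0_iff)
qed

end
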